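(* Let $A$ be a T-brace whose additive group is torsion-free. If $A$ is Smoktunowicz-nilpotent, then $A$ is abelian (i.e. $a\star b=0$ for all $a,b\in A$).
   Context: A (left) brace is a set $A$ with two operations $+$ and $\cdot$ such that $(A,+)$ is an abelian group, $(A,\cdot)$ is a group, and $a(b+c)=ab+ac-a$ for all $a,b,c\in A$. Put $a\star b=ab-a-b$. For subsets $K,L$, $K\star L$ denotes the subgroup of $(A,+)$ generated by all $x\star y$ with $x\in K,y\in L$. A subbrace is a subset which is a subgroup of both $(A,+)$ and $(A,\cdot)$; a subbrace $L$ is an ideal if $a\star z, z\star a\in L$ for all $a\in A$, $z\in L$. $A$ is a T-brace if whenever $I$ is an ideal of $J$ and $J$ is an ideal of $A$, then $I$ is an ideal of $A$. Define $A^{(1)}=A$, $A^{(n+1)}=A^{(n)}\star A$ and $A^1=A$, $A^{n+1}=A\star A^n$. $A$ is Smoktunowicz-nilpotent if $A^{(n)}=0$ and $A^k=0$ for some natural numbers $n,k$. *)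

theory Defs
  imports "HOL-Algebra.Algebra"
begin

definition brace :: "('a, 'm) ring_scheme \<Rightarrow> bool" where
  "brace R \<longleftrightarrow> comm_group (add_monoid R) \<and> group R \<and>
     (\<forall>a\<in>carrier R. \<forall>b\<in>carrier R. \<forall>c\<in>carrier R.
        a \<otimes>\<^bsub>R\<^esub> (b \<oplus>\<^bsub>R\<^esub> c) = (a \<otimes>\<^bsub>R\<^esub> b \<oplus>\<^bsub>R\<^esub> a \<otimes>\<^bsub>R\<^esub> c) \<ominus>\<^bsub>R\<^esub> a)"

definition bstar :: "('a, 'm) ring_scheme \<Rightarrow> 'a \<Rightarrow> 'a \<Rightarrow> 'a" where
  "bstar R a b = (a \<otimes>\<^bsub>R\<^esub> b \<ominus>\<^bsub>R\<^esub> a) \<ominus>\<^bsub>R\<^esub> b"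

definition bstar_set :: "('a, 'm) ring_scheme \<Rightarrow> 'a set \<Rightarrow> 'a set \<Rightarrow> 'a set" where
  "bstar_set R K L = generate (add_monoid R) {bstar R x y | x y. x \<in> K \<and> y \<in> L}"

definition subbrace :: "('a, 'm) ring_scheme \<Rightarrow> 'a set \<Rightarrow> bool" where
  "subbrace R L \<longleftrightarrow> subgroup L (add_monoid R) \<and> subgroup L R"

definition brace_ideal_in :: "('a, 'm) ring_scheme \<Rightarrow> 'a set \<Rightarrow> 'a set \<Rightarrow> bool" where
  "brace_ideal_in R J I \<longleftrightarrow> I \<subseteq> J \<and> subbrace R I \<and>
     (\<forall>a\<in>J. \<forall>z\<in>I. bstar R a z \<in> I \<and> bstar R z a \<in> I)"

definition brace_ideal :: "('a, 'm) ring_scheme \<Rightarrow> 'a set \<Rightarrow> bool" where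
  "brace_ideal R I \<longleftrightarrow> brace_ideal_in R (carrier R) I"

definition T_brace :: "('a, 'm) ring_scheme \<Rightarrow> bool" where
  "T_brace R \<longleftrightarrow> brace R \<and>
     (\<forall>I J. brace_ideal R J \<and> brace_ideal_in R J I \<longrightarrow> brace_ideal R I)"

text \<open>A^(1) = A, A^(n+1) = A^(n) \<star> A  (index 0 also set to A, unused).\<close>
fun right_series :: "('a, 'm) ring_scheme \<Rightarrow> nat \<Rightarrow> 'a set" where
  "right_series R 0 = carrier R"
| "right_series R (Suc 0) = carrier R"
| "right_series R (Suc (Suc n)) = bstar_set R (right_series R (Suc n)) (carrier R)"

text \<open>A^1 = A, A^(n+1) = A \<star> A^n  (index 0 also set to A, unused).\<close>
fun left_series :: "('a, 'm) ring_scheme \<Rightarrow> nat \<Rightarrow> 'a set" where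
  "left_series R 0 = carrier R"
| "left_series R (Suc 0) = carrier R"
| "left_series R (Suc (Suc n)) = bstar_set R (carrier R) (left_series R (Suc n))"

definition smoktunowicz_nilpotent :: "('a, 'm) ring_scheme \<Rightarrow> bool" where
  "smoktunowicz_nilpotent R \<longleftrightarrow>
     (\<exists>n k. n \<ge> 1 \<and> k \<ge> 1 \<and> right_series R n = {\<zero>\<^bsub>R\<^esub>} \<and> left_series R k = {\<zero>\<^bsub>R\<^esub>})"

definition add_torsion_free :: "('a, 'm) ring_scheme \<Rightarrow> bool" where
  "add_torsion_free R \<longleftrightarrow>
     (\<forall>a\<in>carrier R. \<forall>n::nat. n > 0 \<and> [n] \<cdot>\<^bsub>R\<^esub> a = \<zero>\<^bsub>R\<^esub> \<longrightarrow> a = \<zero>\<^bsub>R\<^esub>)"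

end

theory Submission
  imports Defs
begin

text \<open>
  Let \<open>Ann\<close> be the annihilator \<open>{z. a \<star> z = z \<star> a = 0 for all a}\<close> and \<open>Ann2\<close> the
  preimage of the annihilator of \<open>A / Ann\<close>. The heart of the proof is that \<open>Ann2 = Ann\<close> in a
  torsion-free T-brace. For \<open>y \<in> Ann2 - Ann\<close>, the set \<open>\<langle>y\<rangle> + Ann\<close> is an ideal of \<open>A\<close>, and
  \<open>I = \<langle>y\<rangle> + \<langle>y \<star> y\<rangle>\<close> is an ideal of it because stars of its elements are multiples of
  \<open>y \<star> y\<close>; so \<open>I\<close> is an ideal of \<open>A\<close>. By torsion-freeness no nonzero multiple of \<open>y\<close>
  lies in \<open>Ann\<close>, so \<open>I \<inter> Ann \<subseteq> \<langle>y \<star> y\<rangle>\<close>, which contains \<open>a \<star> y\<close> and \<open>y \<star> a\<close>. For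
  \<open>x \<in> Ann2 - Ann\<close> and \<open>y = 2x\<close> this gives \<open>2(x \<star> x) = x \<star> y \<in> \<langle>4(x \<star> x)\<rangle>\<close>, whence
  \<open>x \<star> x = 0\<close>; for \<open>y = x\<close> it then gives \<open>a \<star> x, x \<star> a \<in> \<langle>0\<rangle>\<close>, i.e. \<open>x \<in> Ann\<close>.

  Since every \<open>A^(j)\<close> is an ideal, a downward induction on \<open>j\<close> and, inside it, on \<open>k\<close>
  then shows \<open>A^(j) \<inter> A^k \<subseteq> Ann\<close>: an element of the intersection stars into \<open>A^(j+1)\<close>
  on the right and into \<open>A^(j) \<inter> A^(k+1)\<close> on the left, so it lies in \<open>Ann2 = Ann\<close>.
\<close>

locale left_brace = abelian_group R + group R for R :: "('a, 'm) ring_scheme" (structure) +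
  assumes brace_distr:
    "\<lbrakk>a \<in> carrier R; b \<in> carrier R; c \<in> carrier R\<rbrakk> \<Longrightarrow> a \<otimes> (b \<oplus> c) = (a \<otimes> b \<oplus> a \<otimes> c) \<ominus> a"

lemma brace_imp_left_brace: "brace R \<Longrightarrow> left_brace R"
  unfolding brace_def left_brace_def left_brace_axioms_def
  by (auto intro: comm_group_abelian_groupI)

context left_brace
begin

section \<open>Brace arithmetic\<close>

abbreviation bstar_op (infixl \<open>\<star>\<close> 70) where "a \<star> b \<equiv> bstar R a b"

lemma a_inv_zero [simp]: "\<ominus> \<zero> = \<zero>"
  using minus_equality[of \<zero> \<zero>] by simp

lemma one_eq_zero: "\<one> = \<zero>"
proof -
  have "\<zero> = \<ominus> \<one>"
    using brace_distr[of \<one> \<zero> \<zero>] by (simp add: a_minus_def)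
  thus ?thesis
    by (metis a_inv_zero minus_minus one_closed)
qed

definition lam :: "'a \<Rightarrow> 'a \<Rightarrow> 'a" where "lam a u = a \<otimes> u \<ominus> a"

lemma lam_closed [simp]: "a \<in> carrier R \<Longrightarrow> u \<in> carrier R \<Longrightarrow> lam a u \<in> carrier R"
  by (simp add: lam_def)

lemma lam_add:
  assumes "a \<in> carrier R" "u \<in> carrier R" "v \<in> carrier R"
  shows "lam a (u \<oplus> v) = lam a u \<oplus> lam a v"
  using assms unfolding lam_def brace_distr[OF assms]
  by (simp add: a_minus_def a_ac minus_add)

lemma lam_zero [simp]: "a \<in> carrier R \<Longrightarrow> lam a \<zero> = \<zero>"
  using lam_add[of a \<zero> \<zero>] by simp

lemma lam_neg:
  assumes "a \<in> carrier R" "u \<in> carrier R"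
  shows "lam a (\<ominus> u) = \<ominus> lam a u"
proof -
  have "lam a u \<oplus> lam a (\<ominus> u) = \<zero>"
    using lam_add[of a u "\<ominus> u"] assms by (simp add: r_neg)
  thus ?thesis
    using assms by (metis a_inv_closed lam_closed minus_equality a_comm)
qed

lemma lam_diff:
  assumes "a \<in> carrier R" "u \<in> carrier R" "v \<in> carrier R"
  shows "lam a (u \<ominus> v) = lam a u \<ominus> lam a v"
  using assms by (simp add: a_minus_def lam_add lam_neg)

lemma mult_eq_add_lam: "a \<in> carrier R \<Longrightarrow> u \<in> carrier R \<Longrightarrow> a \<otimes> u = a \<oplus> lam a u"
  by (simp add: lam_def a_minus_def a_ac r_neg2)

lemma lam_mult:
  assumes "a \<in> carrier R" "b \<in> carrier R" "u \<in> carrier R"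
  shows "lam (a \<otimes> b) u = lam a (lam b u)"
proof -
  have "lam a (lam b u) = lam a (b \<otimes> u) \<ominus> lam a b"
    using assms by (simp add: lam_def[of b] lam_diff)
  also have "\<dots> = lam (a \<otimes> b) u"
    using assms by (simp add: lam_def m_assoc a_minus_def minus_add a_ac r_neg2)
  finally show ?thesis by simp
qed

lemma lam_zero_left: "u \<in> carrier R \<Longrightarrow> lam \<zero> u = u"
  using l_one[of u] by (simp add: lam_def a_minus_def one_eq_zero)

lemma bstar_eq_lam_diff: "a \<in> carrier R \<Longrightarrow> b \<in> carrier R \<Longrightarrow> a \<star> b = lam a b \<ominus> b"
  by (simp add: bstar_def lam_def)

lemma lam_eq_bstar_add: "a \<in> carrier R \<Longrightarrow> b \<in> carrier R \<Longrightarrow> lam a b = a \<star> b \<oplus> b"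
  by (simp add: bstar_eq_lam_diff a_minus_def a_assoc l_neg)

lemma bstar_closed [simp]: "a \<in> carrier R \<Longrightarrow> b \<in> carrier R \<Longrightarrow> a \<star> b \<in> carrier R"
  by (simp add: bstar_def)

lemma mult_eq_add_bstar: "a \<in> carrier R \<Longrightarrow> b \<in> carrier R \<Longrightarrow> a \<otimes> b = a \<oplus> b \<oplus> a \<star> b"
  by (simp add: bstar_def a_minus_def a_ac r_neg2 minus_add)

lemma bstar_add_right:
  assumes "a \<in> carrier R" "u \<in> carrier R" "v \<in> carrier R"
  shows "a \<star> (u \<oplus> v) = a \<star> u \<oplus> a \<star> v"
  using assms by (simp add: bstar_eq_lam_diff lam_add a_minus_def a_ac minus_add)

lemma bstar_zero_right [simp]: "a \<in> carrier R \<Longrightarrow> a \<star> \<zero> = \<zero>"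
  by (simp add: bstar_eq_lam_diff a_minus_def)

lemma bstar_zero_left [simp]: "a \<in> carrier R \<Longrightarrow> \<zero> \<star> a = \<zero>"
  by (simp add: bstar_eq_lam_diff lam_zero_left a_minus_def r_neg)

lemma bstar_neg_right:
  assumes "a \<in> carrier R" "u \<in> carrier R"
  shows "a \<star> (\<ominus> u) = \<ominus> (a \<star> u)"
  using assms by (simp add: bstar_eq_lam_diff lam_neg a_minus_def minus_add)

lemma bstar_mult_left:
  assumes "a \<in> carrier R" "b \<in> carrier R" "c \<in> carrier R"
  shows "(a \<otimes> b) \<star> c = a \<star> (b \<star> c) \<oplus> a \<star> c \<oplus> b \<star> c"
  using assms
  by (simp add: bstar_eq_lam_diff lam_mult lam_diff lam_add lam_neg a_minus_def a_ac minus_add r_neg2)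

lemma bstar_left_hom: "a \<in> carrier R \<Longrightarrow> group_hom (add_monoid R) (add_monoid R) (\<lambda>u. a \<star> u)"
  by (auto intro!: group_hom.intro homI simp: group_hom_axioms_def bstar_add_right)

lemma bstar_int_pow_right:
  "a \<in> carrier R \<Longrightarrow> y \<in> carrier R \<Longrightarrow> a \<star> add_pow R (k::int) y = add_pow R k (a \<star> y)"
  using group_hom.hom_int_pow[OF bstar_left_hom] by (simp add: add_pow_def)

section \<open>The annihilator and the second annihilator\<close>

definition Ann :: "'a set" where
  "Ann = {z \<in> carrier R. \<forall>a\<in>carrier R. a \<star> z = \<zero> \<and> z \<star> a = \<zero>}"

lemma Ann_carrier: "z \<in> Ann \<Longrightarrow> z \<in> carrier R"
  unfolding Ann_def by blast

lemma bstar_Ann [simp]: "z \<in> Ann \<Longrightarrow> a \<in> carrier R \<Longrightarrow> a \<star> z = \<zero>"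
  unfolding Ann_def by blast

lemma Ann_bstar [simp]: "z \<in> Ann \<Longrightarrow> a \<in> carrier R \<Longrightarrow> z \<star> a = \<zero>"
  unfolding Ann_def by blast

lemma AnnI:
  "z \<in> carrier R \<Longrightarrow> (\<And>a. a \<in> carrier R \<Longrightarrow> a \<star> z = \<zero> \<and> z \<star> a = \<zero>) \<Longrightarrow> z \<in> Ann"
  unfolding Ann_def by blast

lemma add_Ann_eq_mult: "z \<in> Ann \<Longrightarrow> p \<in> carrier R \<Longrightarrow> p \<oplus> z = p \<otimes> z"
  by (simp add: mult_eq_add_bstar Ann_carrier)

lemma mult_Ann_bstar: "z \<in> Ann \<Longrightarrow> p \<in> carrier R \<Longrightarrow> a \<in> carrier R \<Longrightarrow> (p \<otimes> z) \<star> a = p \<star> a"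
  by (simp add: bstar_mult_left Ann_carrier)

lemma zero_Ann: "\<zero> \<in> Ann"
  by (rule AnnI) simp_all

lemma Ann_neg:
  assumes "z \<in> Ann"
  shows "\<ominus> z \<in> Ann"
proof (rule AnnI)
  have z: "z \<in> carrier R"
    using assms by (rule Ann_carrier)
  show "\<ominus> z \<in> carrier R"
    using z by simp
  fix a
  assume a: "a \<in> carrier R"
  have "(\<ominus> z) \<star> a = (z \<otimes> \<ominus> z) \<star> a"
    using assms z a by (simp add: bstar_mult_left)
  also have "z \<otimes> \<ominus> z = \<zero>"
    using assms z by (simp add: mult_eq_add_bstar r_neg)
  also have "\<zero> \<star> a = \<zero>"
    using a by simp
  finally show "a \<star> (\<ominus> z) = \<zero> \<and> (\<ominus> z) \<star> a = \<zero>"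
    using assms z a by (simp add: bstar_neg_right)
qed

lemma Ann_add:
  assumes "z \<in> Ann" "w \<in> Ann"
  shows "z \<oplus> w \<in> Ann"
proof (rule AnnI)
  have zw: "z \<in> carrier R" "w \<in> carrier R"
    using assms by (simp_all add: Ann_carrier)
  show "z \<oplus> w \<in> carrier R"
    using zw by simp
  fix a
  assume a: "a \<in> carrier R"
  have "(z \<oplus> w) \<star> a = (z \<otimes> w) \<star> a"
    using assms zw by (simp add: add_Ann_eq_mult)
  also have "\<dots> = \<zero>"
    using assms zw a by (simp add: bstar_mult_left)
  finally show "a \<star> (z \<oplus> w) = \<zero> \<and> (z \<oplus> w) \<star> a = \<zero>"
    using assms zw a by (simp add: bstar_add_right)
qed

lemma Ann_subgroup: "additive_subgroup Ann R"
  unfolding additive_subgroup_def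
  by (rule subgroup.intro) (auto simp: Ann_carrier Ann_add zero_Ann Ann_neg simp flip: a_inv_def)

lemma bstar_add_left:
  assumes "u \<in> carrier R" "v \<in> carrier R" "a \<in> carrier R" "u \<star> v \<in> Ann" "v \<star> a \<in> Ann"
  shows "(u \<oplus> v) \<star> a = u \<star> a \<oplus> v \<star> a"
proof -
  have "u \<oplus> v = (u \<otimes> v) \<oplus> \<ominus> (u \<star> v)"
    using assms by (simp add: mult_eq_add_bstar a_assoc r_neg)
  also have "\<dots> = (u \<otimes> v) \<otimes> \<ominus> (u \<star> v)"
    using assms by (simp add: add_Ann_eq_mult Ann_neg)
  finally have "(u \<oplus> v) \<star> a = (u \<otimes> v) \<star> a"
    using assms by (simp add: mult_Ann_bstar Ann_neg)
  also have "\<dots> = u \<star> a \<oplus> v \<star> a"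
    using assms by (simp add: bstar_mult_left)
  finally show ?thesis .
qed

lemma bstar_neg_left:
  assumes y: "y \<in> carrier R" and a: "a \<in> carrier R"
    and y_Ann: "\<And>b. b \<in> carrier R \<Longrightarrow> y \<star> b \<in> Ann"
  shows "(\<ominus> y) \<star> a = \<ominus> (y \<star> a)"
proof -
  have iy: "inv y \<in> carrier R"
    using y by simp
  \<comment> \<open>\<open>\<ominus> y\<close> and \<open>inv y\<close> differ by \<open>y \<star> inv y \<in> Ann\<close>, which is invisible to left stars\<close>
  have "(inv y \<oplus> y \<star> inv y) \<oplus> y = \<zero>"
    using mult_eq_add_bstar[OF y iy] y iy by (simp add: one_eq_zero a_ac)
  hence "\<ominus> y = inv y \<oplus> y \<star> inv y"
    using y iy by (simp add: minus_equality)
  also have "\<dots> = inv y \<otimes> (y \<star> inv y)"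
    using y_Ann[OF iy] iy by (rule add_Ann_eq_mult)
  finally have neg: "(\<ominus> y) \<star> a = inv y \<star> a"
    using y_Ann[OF iy] iy a by (simp add: mult_Ann_bstar)
  define t where "t = inv y \<star> a"
  have t: "t \<in> carrier R"
    using iy a by (simp add: t_def)
  have "\<zero> = (y \<otimes> inv y) \<star> a"
    using y a by (simp add: one_eq_zero)
  also have "\<dots> = y \<star> t \<oplus> y \<star> a \<oplus> t"
    unfolding t_def by (rule bstar_mult_left[OF y iy a])
  finally have sum: "y \<star> t \<oplus> y \<star> a \<oplus> t = \<zero>" ..
  hence "t = \<ominus> (y \<star> t \<oplus> y \<star> a)"
    using y a t by (simp add: a_ac minus_equality[symmetric])
  hence "t \<in> Ann"
    using Ann_neg[OF Ann_add[OF y_Ann[OF t] y_Ann[OF a]]] by (rule ssubst)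
  hence "t \<oplus> y \<star> a = \<zero>"
    using sum y a t by (simp add: a_comm)
  hence "\<ominus> (y \<star> a) = t"
    using y a t by (simp add: minus_equality)
  thus ?thesis
    using neg by (simp add: t_def)
qed

definition Ann2 :: "'a set" where
  "Ann2 = {y \<in> carrier R. \<forall>a\<in>carrier R. a \<star> y \<in> Ann \<and> y \<star> a \<in> Ann}"

lemma Ann2_carrier: "y \<in> Ann2 \<Longrightarrow> y \<in> carrier R"
  by (simp add: Ann2_def)

lemma bstar_Ann2: "y \<in> Ann2 \<Longrightarrow> a \<in> carrier R \<Longrightarrow> a \<star> y \<in> Ann"
  by (simp add: Ann2_def)

lemma Ann2_bstar: "y \<in> Ann2 \<Longrightarrow> a \<in> carrier R \<Longrightarrow> y \<star> a \<in> Ann"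
  by (simp add: Ann2_def)

lemma Ann_subset_Ann2: "Ann \<subseteq> Ann2"
  by (auto simp: Ann2_def Ann_carrier zero_Ann)

lemma Ann2_add_bstar:
  "u \<in> Ann2 \<Longrightarrow> v \<in> Ann2 \<Longrightarrow> a \<in> carrier R \<Longrightarrow> (u \<oplus> v) \<star> a = u \<star> a \<oplus> v \<star> a"
  by (simp add: bstar_add_left Ann2_carrier Ann2_bstar)

lemma Ann2_neg_bstar: "u \<in> Ann2 \<Longrightarrow> a \<in> carrier R \<Longrightarrow> (\<ominus> u) \<star> a = \<ominus> (u \<star> a)"
  by (simp add: bstar_neg_left Ann2_carrier Ann2_bstar)

lemma Ann2_subgroup: "additive_subgroup Ann2 R"
  unfolding additive_subgroup_def
proof (rule subgroup.intro)
  show "\<one>\<^bsub>add_monoid R\<^esub> \<in> Ann2"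
    using Ann_subset_Ann2 zero_Ann by auto
  fix u v
  assume u: "u \<in> Ann2" and v: "v \<in> Ann2"
  show "u \<otimes>\<^bsub>add_monoid R\<^esub> v \<in> Ann2"
    using u v by (auto simp: Ann2_def Ann2_add_bstar bstar_add_right Ann_add)
  show "inv\<^bsub>add_monoid R\<^esub> u \<in> Ann2"
    using u by (auto simp: Ann2_def Ann2_neg_bstar bstar_neg_right Ann_neg simp flip: a_inv_def)
qed (auto simp: Ann2_carrier)

lemma Ann2_int_pow_bstar:
  assumes "y \<in> Ann2" "a \<in> carrier R"
  shows "add_pow R (k::int) y \<star> a = add_pow R k (y \<star> a)"
proof -
  note Ann2 = Ann2_subgroup[unfolded additive_subgroup_def]
  have "(\<lambda>u. u \<star> a) \<in> hom ((add_monoid R)\<lparr>carrier := Ann2\<rparr>) (add_monoid R)"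
    using assms by (intro homI) (auto simp: Ann2_add_bstar Ann2_carrier)
  from hom_int_pow[OF this _ add.subgroup_imp_group[OF Ann2] a_group]
  show ?thesis
    using assms add.int_pow_consistent[OF Ann2] by (simp add: add_pow_def)
qed

section \<open>Ideals and the right series\<close>

lemma subbraceI:
  assumes S: "additive_subgroup S R"
    and bstar_closed: "\<And>u v. u \<in> S \<Longrightarrow> v \<in> S \<Longrightarrow> u \<star> v \<in> S"
    and bstar_inv_closed: "\<And>u. u \<in> S \<Longrightarrow> u \<star> inv u \<in> S"
  shows "subbrace R S"
proof -
  interpret S: additive_subgroup S R
    by (rule S)
  have "subgroup S R"
  proof
    fix u v
    assume u: "u \<in> S" and v: "v \<in> S"
    show "u \<otimes> v \<in> S"
      using u v bstar_closed[OF u v] by (simp add: mult_eq_add_bstar)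
    have "inv u \<oplus> (u \<oplus> u \<star> inv u) = \<zero>"
      using mult_eq_add_bstar[of u "inv u"] u by (simp add: one_eq_zero a_ac)
    hence "\<ominus> (u \<oplus> u \<star> inv u) = inv u"
      using u by (simp add: minus_equality)
    thus "inv u \<in> S"
      using u bstar_inv_closed[OF u] by (metis S.a_closed S.a_inv_closed)
  qed (auto simp: S.a_subset one_eq_zero)
  thus ?thesis
    using S by (simp add: subbrace_def additive_subgroup_def)
qed

lemma brace_ideal_inI:
  assumes J: "subgroup J R" and I: "additive_subgroup I R" and "I \<subseteq> J"
    and closed: "\<And>a z. a \<in> J \<Longrightarrow> z \<in> I \<Longrightarrow> a \<star> z \<in> I \<and> z \<star> a \<in> I"
  shows "brace_ideal_in R J I"
proof -
  have "subbrace R I"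
  proof (rule subbraceI[OF I])
    fix u v
    assume "u \<in> I" "v \<in> I"
    thus "u \<star> v \<in> I"
      using closed \<open>I \<subseteq> J\<close> by blast
    show "u \<star> inv u \<in> I"
      using closed \<open>u \<in> I\<close> \<open>I \<subseteq> J\<close> subgroup.m_inv_closed[OF J] by blast
  qed
  thus ?thesis
    using assms by (simp add: brace_ideal_in_def)
qed

lemma brace_ideal_iff:
  "brace_ideal R S \<longleftrightarrow>
     additive_subgroup S R \<and> (\<forall>a\<in>carrier R. \<forall>y\<in>S. a \<star> y \<in> S \<and> y \<star> a \<in> S)"
proof
  assume "brace_ideal R S"
  thus "additive_subgroup S R \<and> (\<forall>a\<in>carrier R. \<forall>y\<in>S. a \<star> y \<in> S \<and> y \<star> a \<in> S)"
    by (simp add: brace_ideal_def brace_ideal_in_def subbrace_def additive_subgroup_def)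
next
  assume "additive_subgroup S R \<and> (\<forall>a\<in>carrier R. \<forall>y\<in>S. a \<star> y \<in> S \<and> y \<star> a \<in> S)"
  thus "brace_ideal R S"
    unfolding brace_ideal_def
    by (intro brace_ideal_inI subgroup_self) (auto dest: additive_subgroup.a_subset)
qed

lemma brace_ideal_subset: "brace_ideal R S \<Longrightarrow> S \<subseteq> carrier R"
  by (simp add: brace_ideal_iff additive_subgroup.a_subset)

lemma brace_ideal_r_coset_subset_l_coset:
  assumes S: "brace_ideal R S" and b: "b \<in> carrier R"
  shows "S #> b \<subseteq> b <# S"
proof
  fix w
  assume "w \<in> S #> b"
  then obtain u where u: "u \<in> S" and w: "w = u \<otimes> b"
    by (auto simp: r_coset_def)
  interpret S: additive_subgroup S R
    using S by (simp add: brace_ideal_iff)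
  define t where "t = u \<oplus> u \<star> b"
  have t: "t \<in> S" "t \<in> carrier R"
    using S u b by (auto simp: t_def brace_ideal_iff)
  have "b \<otimes> lam (inv b) t = b \<oplus> lam b (lam (inv b) t)"
    using b t by (simp add: mult_eq_add_lam)
  also have "lam b (lam (inv b) t) = lam (b \<otimes> inv b) t"
    using b t by (simp only: lam_mult inv_closed)
  also have "\<dots> = t"
    using b t by (simp add: one_eq_zero lam_zero_left)
  also have "b \<oplus> t = w"
    using mult_eq_add_bstar[of u b] u b by (simp add: w t_def a_ac)
  moreover have "lam (inv b) t \<in> S"
    using S b t by (simp add: lam_eq_bstar_add brace_ideal_iff)
  ultimately show "w \<in> b <# S"
    by (auto simp: l_coset_def)
qed

lemma brace_ideal_conj_closed:
  assumes S: "brace_ideal R S" and a: "a \<in> carrier R" and y: "y \<in> S"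
  shows "a \<otimes> y \<otimes> inv a \<in> S"
proof -
  have "y \<otimes> inv a \<in> inv a <# S"
    using brace_ideal_r_coset_subset_l_coset[OF S] a y by (auto simp: r_coset_def)
  then obtain v where v: "v \<in> S" "y \<otimes> inv a = inv a \<otimes> v"
    by (auto simp: l_coset_def)
  have carrier: "y \<in> carrier R" "v \<in> carrier R"
    using brace_ideal_subset[OF S] y v by auto
  have "a \<otimes> y \<otimes> inv a = a \<otimes> (inv a \<otimes> v)"
    using a carrier by (simp add: m_assoc v(2))
  also have "\<dots> = v"
    using a carrier by (simp flip: m_assoc)
  finally show ?thesis
    using v by simp
qed

lemma bstar_bstar_conj:
  assumes a: "a \<in> carrier R" and x: "x \<in> carrier R" "x' \<in> carrier R" and b: "b \<in> carrier R"
    and conj: "a \<otimes> x = x' \<otimes> a"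
  shows "a \<star> (x \<star> b) = x' \<star> (a \<star> b) \<oplus> x' \<star> b \<ominus> x \<star> b"
proof -
  have "a \<star> (x \<star> b) \<oplus> a \<star> b \<oplus> x \<star> b = (a \<otimes> x) \<star> b"
    using a x b by (simp add: bstar_mult_left)
  also have "\<dots> = x' \<star> (a \<star> b) \<oplus> x' \<star> b \<oplus> a \<star> b"
    using a x b by (simp only: conj bstar_mult_left)
  finally have "(a \<star> (x \<star> b) \<oplus> x \<star> b) \<oplus> a \<star> b = (x' \<star> (a \<star> b) \<oplus> x' \<star> b) \<oplus> a \<star> b"
    using a x b by (simp add: a_ac)
  hence "a \<star> (x \<star> b) \<oplus> x \<star> b = x' \<star> (a \<star> b) \<oplus> x' \<star> b"
    using a x b by simp
  thus ?thesis
    using a x b by (simp add: a_minus_def add.inv_solve_right)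
qed

lemma bstar_set_ideal:
  assumes S: "brace_ideal R S"
  shows "brace_ideal R (bstar_set R S (carrier R))"
proof -
  define G where "G = {x \<star> b | x b. x \<in> S \<and> b \<in> carrier R}"
  define S' where "S' = generate (add_monoid R) G"
  have G_S: "G \<subseteq> S"
    using S by (auto simp: G_def brace_ideal_iff)
  hence G: "G \<subseteq> carrier R"
    using brace_ideal_subset[OF S] by blast
  have S': "additive_subgroup S' R"
    unfolding S'_def additive_subgroup_def using G by (rule add.generate_is_subgroup)
  have "S' \<subseteq> S"
    unfolding S'_def using G_S S
    by (simp add: brace_ideal_iff additive_subgroup_def add.generate_subgroup_incl)
  have generator: "x \<star> b \<in> S'" if "x \<in> S" "b \<in> carrier R" for x b
    unfolding S'_def G_def by (rule generate.incl) (use that in blast)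
  hence right: "y \<star> a \<in> S'" if "y \<in> S'" "a \<in> carrier R" for y a
    using that \<open>S' \<subseteq> S\<close> by blast
  have "a \<star> g \<in> S'" if a: "a \<in> carrier R" and "g \<in> G" for a g
  proof -
    obtain x b where g: "g = x \<star> b" "x \<in> S" "b \<in> carrier R"
      using \<open>g \<in> G\<close> by (auto simp: G_def)
    define x' where "x' = a \<otimes> x \<otimes> inv a"
    have x: "x \<in> carrier R" "x' \<in> S" "x' \<in> carrier R"
      using S a g brace_ideal_subset[OF S] by (auto simp: x'_def brace_ideal_conj_closed)
    have "a \<otimes> x = x' \<otimes> a"
      using a x by (simp add: x'_def m_assoc)
    hence "a \<star> g = x' \<star> (a \<star> b) \<oplus> x' \<star> b \<ominus> x \<star> b"
      using a g x by (simp add: bstar_bstar_conj)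
    moreover have "x' \<star> (a \<star> b) \<in> S'" "x' \<star> b \<in> S'" "x \<star> b \<in> S'"
      using a g x by (simp_all add: generator)
    ultimately show ?thesis
      using S' by (simp add: a_minus_def additive_subgroup.a_closed additive_subgroup.a_inv_closed)
  qed
  hence image_G: "(\<lambda>u. a \<star> u) ` G \<subseteq> S'" if "a \<in> carrier R" for a
    using that by blast
  have left: "a \<star> y \<in> S'" if y: "y \<in> S'" and a: "a \<in> carrier R" for y a
  proof -
    have "(\<lambda>u. a \<star> u) ` S' = generate (add_monoid R) ((\<lambda>u. a \<star> u) ` G)"
      unfolding S'_def using group_hom.generate_img[OF bstar_left_hom[OF a], of G] G by simp
    also have "\<dots> \<subseteq> S'"
      using image_G[OF a] S'
      by (simp add: add.generate_subgroup_incl additive_subgroup_def)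
    finally show ?thesis
      using y by blast
  qed
  show ?thesis
    unfolding brace_ideal_iff bstar_set_def using S' left right by (simp add: G_def S'_def)
qed

lemma right_series_ideal: "brace_ideal R (right_series R n)"
proof -
  have carrier_ideal: "brace_ideal R (carrier R)"
    by (simp add: brace_ideal_iff additive_subgroup_def add.subgroup_self)
  have "brace_ideal R (right_series R (Suc n))" for n
    by (induction n) (simp_all add: carrier_ideal bstar_set_ideal)
  thus ?thesis
    using carrier_ideal by (cases n) simp_all
qed

lemma right_series_carrier: "right_series R n \<subseteq> carrier R"
  by (rule brace_ideal_subset[OF right_series_ideal])

lemma right_series_bstar:
  "y \<in> right_series R n \<Longrightarrow> a \<in> carrier R \<Longrightarrow> y \<star> a \<in> right_series R (Suc n)"
  using right_series_carrier by (cases n) (auto simp: bstar_set_def intro: generate.incl)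

lemma left_series_bstar:
  "y \<in> left_series R n \<Longrightarrow> a \<in> carrier R \<Longrightarrow> y \<in> carrier R \<Longrightarrow> a \<star> y \<in> left_series R (Suc n)"
  by (cases n) (auto simp: bstar_set_def intro: generate.incl)

section \<open>Ideals generated by an element of the second annihilator\<close>

abbreviation multiples :: "'a \<Rightarrow> 'a set" where
  "multiples y \<equiv> generate (add_monoid R) {y}"

lemma mem_multiples: "y \<in> carrier R \<Longrightarrow> u \<in> multiples y \<longleftrightarrow> (\<exists>k::int. u = add_pow R k y)"
  by (simp add: add.generate_pow)

lemma multiples_subgroup: "y \<in> carrier R \<Longrightarrow> additive_subgroup (multiples y) R"
  unfolding additive_subgroup_def by (simp add: add.generate_is_subgroup)

lemma multiples_subset: "additive_subgroup H R \<Longrightarrow> y \<in> H \<Longrightarrow> multiples y \<subseteq> H"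
  unfolding additive_subgroup_def by (simp add: add.generate_subgroup_incl)

lemma zero_multiples: "\<zero> \<in> multiples y"
  using generate.one[of "add_monoid R"] by simp

lemma mem_set_add: "u \<in> H <+>\<^bsub>R\<^esub> K \<longleftrightarrow> (\<exists>h\<in>H. \<exists>k\<in>K. u = h \<oplus> k)"
  by (auto simp: set_add_def')

lemma mem_multiples_set_add:
  assumes "y \<in> carrier R"
  shows "u \<in> multiples y <+>\<^bsub>R\<^esub> K \<longleftrightarrow> (\<exists>k::int. \<exists>z\<in>K. u = add_pow R k y \<oplus> z)"
  unfolding mem_set_add Bex_def mem_multiples[OF assms] by blast

lemma bstar_multiples_plus_Ann:
  assumes y: "y \<in> Ann2" and z: "z \<in> Ann" "z' \<in> Ann"
  shows "(add_pow R (k::int) y \<oplus> z) \<star> (add_pow R l y \<oplus> z') = add_pow R (k * l) (y \<star> y)"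
proof -
  define u where "u = add_pow R k y \<oplus> z"
  have carrier: "y \<in> carrier R" "z \<in> carrier R" "z' \<in> carrier R" "u \<in> carrier R"
    using y z by (simp_all add: Ann2_carrier Ann_carrier u_def)
  have ky: "add_pow R k y \<in> Ann2"
    using Ann2_subgroup y by (simp add: additive_subgroup_def add.subgroup_int_pow_closed)
  have "u \<star> (add_pow R l y \<oplus> z') = add_pow R l (u \<star> y)"
    using carrier z by (simp add: bstar_add_right bstar_int_pow_right)
  also have "u \<star> y = add_pow R k (y \<star> y)"
    using carrier ky y z Ann_subset_Ann2 by (auto simp: u_def Ann2_add_bstar Ann2_int_pow_bstar)
  finally show ?thesis
    using carrier by (simp add: u_def add.int_pow_pow mult.commute)
qed

lemma brace_ideal_between_Ann_Ann2:
  assumes "additive_subgroup S R" "Ann \<subseteq> S" "S \<subseteq> Ann2"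
  shows "brace_ideal R S"
  unfolding brace_ideal_iff
  using assms bstar_Ann2 Ann2_bstar by blast

lemma multiples_plus_Ann_ideal:
  assumes y: "y \<in> Ann2"
  shows "brace_ideal R (multiples y <+>\<^bsub>R\<^esub> Ann)"
proof (rule brace_ideal_between_Ann_Ann2)
  have y_carrier: "y \<in> carrier R"
    using y by (rule Ann2_carrier)
  show "additive_subgroup (multiples y <+>\<^bsub>R\<^esub> Ann) R"
    using y_carrier by (simp add: add_additive_subgroups multiples_subgroup Ann_subgroup)
  show "Ann \<subseteq> multiples y <+>\<^bsub>R\<^esub> Ann"
    using zero_multiples by (force simp: mem_set_add Ann_carrier)
  have "multiples y \<subseteq> Ann2"
    using Ann2_subgroup y by (rule multiples_subset)
  thus "multiples y <+>\<^bsub>R\<^esub> Ann \<subseteq> Ann2"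
    using Ann_subset_Ann2 additive_subgroup.a_closed[OF Ann2_subgroup]
    unfolding subset_iff mem_set_add by blast
qed

lemma multiples_ideal_in_multiples_plus_Ann:
  assumes y: "y \<in> Ann2"
  shows "brace_ideal_in R (multiples y <+>\<^bsub>R\<^esub> Ann) (multiples y <+>\<^bsub>R\<^esub> multiples (y \<star> y))"
proof (rule brace_ideal_inI)
  let ?L = "multiples y <+>\<^bsub>R\<^esub> Ann" and ?I = "multiples y <+>\<^bsub>R\<^esub> multiples (y \<star> y)"
  have yy: "y \<in> carrier R" "y \<star> y \<in> Ann"
    using y by (simp_all add: Ann2_carrier Ann2_bstar)
  show "subgroup ?L R"
    using multiples_plus_Ann_ideal[OF y]
    by (simp add: brace_ideal_def brace_ideal_in_def subbrace_def)
  show "additive_subgroup ?I R"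
    using yy by (simp add: add_additive_subgroups multiples_subgroup Ann_carrier)
  have "multiples (y \<star> y) \<subseteq> Ann"
    using Ann_subgroup yy(2) by (rule multiples_subset)
  thus I_L: "?I \<subseteq> ?L"
    unfolding subset_iff mem_set_add by blast
  have "u \<star> v \<in> ?I" if u: "u \<in> ?L" and v: "v \<in> ?L" for u v
  proof -
    obtain k l z z' where "u = add_pow R (k::int) y \<oplus> z" "v = add_pow R (l::int) y \<oplus> z'"
      "z \<in> Ann" "z' \<in> Ann"
      using u v unfolding mem_multiples_set_add[OF yy(1)] by blast
    hence "u \<star> v = \<zero> \<oplus> add_pow R (k * l) (y \<star> y)"
      using y yy by (simp add: bstar_multiples_plus_Ann Ann_carrier)
    moreover have "add_pow R (k * l) (y \<star> y) \<in> multiples (y \<star> y)"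
      using yy by (auto simp: mem_multiples)
    ultimately show ?thesis
      using zero_multiples unfolding mem_set_add by blast
  qed
  thus "\<And>a z. a \<in> ?L \<Longrightarrow> z \<in> ?I \<Longrightarrow> a \<star> z \<in> ?I \<and> z \<star> a \<in> ?I"
    using I_L by blast
qed

section \<open>Torsion-free T-braces\<close>

lemma add_torsion_free_int_pow:
  assumes "add_torsion_free R" "x \<in> carrier R" "k \<noteq> 0" "add_pow R (k::int) x = \<zero>"
  shows "x = \<zero>"
proof -
  have "add_pow R (nat \<bar>k\<bar>) x = \<zero>"
    using assms by (cases "k \<ge> 0") (simp_all add: add_pow_int_ge add_pow_int_lt)
  moreover have "nat \<bar>k\<bar> > 0"
    using \<open>k \<noteq> 0\<close> by simp
  ultimately show ?thesis
    using assms(1,2) unfolding add_torsion_free_def by blast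
qed

context
  assumes torsion_free: "add_torsion_free R"
begin

lemma Ann2_int_pow_in_Ann:
  assumes y: "y \<in> Ann2" and "k \<noteq> 0" and ky: "add_pow R (k::int) y \<in> Ann"
  shows "y \<in> Ann"
proof (rule AnnI)
  show y_carrier: "y \<in> carrier R"
    using y by (rule Ann2_carrier)
  fix a
  assume a: "a \<in> carrier R"
  have "add_pow R k (a \<star> y) = \<zero>"
    using y_carrier a ky by (simp flip: bstar_int_pow_right)
  moreover have "add_pow R k (y \<star> a) = \<zero>"
    using y a ky by (simp flip: Ann2_int_pow_bstar)
  ultimately show "a \<star> y = \<zero> \<and> y \<star> a = \<zero>"
    using add_torsion_free_int_pow[OF torsion_free] \<open>k \<noteq> 0\<close> y_carrier a by simp
qed

lemma Ann2_bstar_in_multiples: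
  assumes T: "T_brace R" and y: "y \<in> Ann2" "y \<notin> Ann" and a: "a \<in> carrier R"
  shows "a \<star> y \<in> multiples (y \<star> y)" "y \<star> a \<in> multiples (y \<star> y)"
proof -
  let ?I = "multiples y <+>\<^bsub>R\<^esub> multiples (y \<star> y)"
  have yy: "y \<in> carrier R" "y \<star> y \<in> Ann"
    using y by (simp_all add: Ann2_carrier Ann2_bstar)
  have "brace_ideal R ?I"
    using T multiples_plus_Ann_ideal[OF y(1)] multiples_ideal_in_multiples_plus_Ann[OF y(1)]
    by (auto simp: T_brace_def)
  moreover have "y \<in> ?I"
    using yy generate.incl[of y "{y}" "add_monoid R"] zero_multiples
    by (force simp: mem_set_add)
  ultimately have in_I: "a \<star> y \<in> ?I" "y \<star> a \<in> ?I"
    using a by (simp_all add: brace_ideal_iff)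
  have "t \<in> multiples (y \<star> y)" if "t \<in> ?I" "t \<in> Ann" for t
  proof -
    obtain k :: int and m where t: "t = add_pow R k y \<oplus> m" "m \<in> multiples (y \<star> y)"
      using \<open>t \<in> ?I\<close> yy by (auto simp: mem_multiples_set_add)
    have m: "m \<in> Ann" "m \<in> carrier R"
      using t(2) multiples_subset[OF Ann_subgroup yy(2)] Ann_carrier by auto
    have "add_pow R k y = t \<ominus> m"
      using t yy m by (simp add: a_minus_def a_assoc r_neg)
    hence "add_pow R k y \<in> Ann"
      using \<open>t \<in> Ann\<close> m by (simp add: a_minus_def Ann_add Ann_neg)
    hence "k = 0"
      using Ann2_int_pow_in_Ann y by blast
    thus ?thesis
      using t m by (simp add: add_pow_def)
  qed
  thus "a \<star> y \<in> multiples (y \<star> y)" "y \<star> a \<in> multiples (y \<star> y)"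
    using in_I y a by (simp_all add: bstar_Ann2 Ann2_bstar)
qed

lemma Ann2_bstar_self:
  assumes T: "T_brace R" and x: "x \<in> Ann2" "x \<notin> Ann"
  shows "x \<star> x = \<zero>"
proof -
  define c where "c = x \<star> x"
  define y where "y = add_pow R (2::int) x"
  have x_carrier: "x \<in> carrier R"
    using x by (simp add: Ann2_carrier)
  have c: "c \<in> carrier R"
    using x_carrier by (simp add: c_def)
  have y: "y \<in> Ann2" "y \<notin> Ann"
    using Ann2_subgroup x Ann2_int_pow_in_Ann[OF x(1), of 2]
    by (auto simp: y_def additive_subgroup_def add.subgroup_int_pow_closed)
  have "y \<star> y = add_pow R (4::int) c"
    using bstar_multiples_plus_Ann[OF x(1) zero_Ann zero_Ann, of 2 2] x_carrier
    by (simp add: y_def c_def)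
  moreover have "x \<star> y = add_pow R (2::int) c"
    using x_carrier by (simp add: y_def c_def bstar_int_pow_right)
  ultimately have "add_pow R (2::int) c \<in> multiples (add_pow R (4::int) c)"
    using Ann2_bstar_in_multiples(1)[OF T y x_carrier] by (simp only:)
  then obtain k :: int where "add_pow R (2::int) c = add_pow R (4 * k) c"
    using c by (auto simp: mem_multiples add.int_pow_pow)
  hence "add_pow R (2 - 4 * k) c = \<zero>"
    using c by (simp add: add.int_pow_diff r_neg)
  moreover have "2 - 4 * k \<noteq> 0"
    by presburger
  ultimately have "c = \<zero>"
    using add_torsion_free_int_pow[OF torsion_free] c by blast
  thus ?thesis
    by (simp add: c_def)
qed

lemma Ann2_subset_Ann:
  assumes T: "T_brace R"
  shows "Ann2 \<subseteq> Ann"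
proof
  fix x
  assume x: "x \<in> Ann2"
  show "x \<in> Ann"
  proof (rule ccontr)
    assume x_notin: "x \<notin> Ann"
    have x_carrier: "x \<in> carrier R"
      using x by (rule Ann2_carrier)
    have "multiples (x \<star> x) = {\<zero>}"
      using Ann2_bstar_self[OF T x x_notin] by (auto simp: mem_multiples)
    hence "x \<in> Ann"
      using Ann2_bstar_in_multiples[OF T x x_notin] by (auto intro: AnnI[OF x_carrier])
    with x_notin show False ..
  qed
qed

lemma right_series_inter_left_series_subset_Ann:
  assumes T: "T_brace R" and next_Ann: "right_series R (Suc j) \<subseteq> Ann"
    and K: "left_series R K = {\<zero>}" and "k \<le> K"
  shows "right_series R j \<inter> left_series R k \<subseteq> Ann"
  using \<open>k \<le> K\<close>
proof (induction k rule: inc_induct)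
  case base
  show ?case
    using K zero_Ann by auto
next
  case (step k)
  have "y \<in> Ann2" if y: "y \<in> right_series R j" "y \<in> left_series R k" for y
    unfolding Ann2_def
  proof (intro CollectI conjI ballI)
    show y_carrier: "y \<in> carrier R"
      using y right_series_carrier by blast
    fix a
    assume a: "a \<in> carrier R"
    show "y \<star> a \<in> Ann"
      using next_Ann right_series_bstar[OF y(1) a] by blast
    have "a \<star> y \<in> right_series R j"
      using right_series_ideal[of j] a y by (simp add: brace_ideal_iff)
    thus "a \<star> y \<in> Ann"
      using step.IH left_series_bstar[OF y(2) a y_carrier] by blast
  qed
  thus ?case
    using Ann2_subset_Ann[OF T] by blast
qed

lemma right_series_subset_Ann:
  assumes T: "T_brace R" and N: "right_series R N = {\<zero>}" and K: "left_series R K = {\<zero>}"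
    and "j \<le> N"
  shows "right_series R j \<subseteq> Ann"
  using \<open>j \<le> N\<close>
proof (induction j rule: inc_induct)
  case base
  show ?case
    using N zero_Ann by simp
next
  case (step j)
  show ?case
    using right_series_inter_left_series_subset_Ann[OF T step.IH K, of 0] right_series_carrier
    by auto
qed

end

end

theorem corollary2:
  fixes R :: "('a, 'm) ring_scheme"
  assumes "T_brace R"
    and "add_torsion_free R"
    and "smoktunowicz_nilpotent R"
  shows "\<forall>a\<in>carrier R. \<forall>b\<in>carrier R. bstar R a b = \<zero>\<^bsub>R\<^esub>"
proof -
  interpret left_brace R
    using assms(1) by (simp add: T_brace_def brace_imp_left_brace)
  obtain N K where N: "right_series R N = {\<zero>\<^bsub>R\<^esub>}" and K: "left_series R K = {\<zero>\<^bsub>R\<^esub>}"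
    using assms(3) by (auto simp: smoktunowicz_nilpotent_def)
  have "carrier R \<subseteq> Ann"
    using right_series_subset_Ann[OF assms(2,1) N K, of 0] by simp
  thus ?thesis
    by auto
qed

end
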